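(* There is no SLCS formula $\varphi$ such that for every quasi-discrete neighbourhood model $\mathcal M$ with underlying space $(X,\mathcal N)$: $(X,\mathcal N)$ is $T_0$-separated if and only if $\mathcal M,x\models\varphi$ for every $x\in X$. (In particular, there exist a $T_0$-separated and a non-$T_0$-separated quasi-discrete model with a path preserving bisimulation between them relating every point of each model to some point of the other.)
   Context: A neighbourhood space $(X,\mathcal N)$ assigns to each $x\in X$ a filter $\mathcal N(x)$ on $X$ (closed under finite intersections and supersets, not containing $\emptyset$) such that $x\in N$ for all $N\in\mathcal N(x)$. Closure: $\mathcal C(A)=\{x\mid\forall N\in\mathcal N(x): A\cap N\neq\emptyset\}$. Continuity: $f$ continuous iff $f^{-1}[N]\in\mathcal N_1(x)$ for all $N\in\mathcal N_2(f(x))$. The space is quasi-discrete if each $x$ has a minimal neighbourhood $N_{\min}(x)\in\mathcal N(x)$ contained in every element of $\mathcal N(x)$. A quasi-discrete neighbourhood model is $\mathcal M=((X,\mathcal N),\mathbb N,V)$ with $(X,\mathcal N)$ quasi-discrete, index space the natural numbers with order $\le$, least element $0$ and the quasi-discrete neighbourhood system with $N_{\min}(n)=\{n,n+1\}$, and valuation $V:X\to\mathcal P(\mathsf P)$ for a fixed countable set $\mathsf P$ of atoms. A path is a continuous map $p:\mathbb N\to X$. The space is $T_0$-separated if for all $x,y\in X$, $y\in\mathcal C(\{x\})$ and $x\in\mathcal C(\{y\})$ imply $x=y$. SLCS formulas: $\varphi::=a\mid\top\mid\neg\varphi\mid\varphi\wedge\varphi\mid\mathcal N\varphi\mid\varphi\,\mathcal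 R\,\varphi\mid\varphi\,\mathcal P\,\varphi$ with $a\in\mathsf P$. Semantics: $\mathcal M,x\models a$ iff $a\in V(x)$; Booleans as usual; $\mathcal M,x\models\mathcal N\varphi$ iff $x\in\mathcal C(\{y\mid\mathcal M,y\models\varphi\})$; $\mathcal M,x\models\varphi\,\mathcal R\,\psi$ iff there are a path $p$ and $n$ with $p(n)=x$, $\mathcal M,p(0)\models\psi$ and $\mathcal M,p(i)\models\varphi$ for all $0<i\le n$; $\mathcal M,x\models\varphi\,\mathcal P\,\psi$ iff there are a path $p$ with $p(0)=x$ and $n$ with $\mathcal M,p(n)\models\psi$ and $\mathcal M,p(i)\models\varphi$ for all $0\le i<n$. Path preserving bisimulation: for models $\mathcal M_1,\mathcal M_2$ over the same index space with path sets $\mathcal P_1,\mathcal P_2$, a triple $(Z_{\mathcal N},Z_1,Z_2)$, $\emptyset\ne Z_{\mathcal N}\subseteq X_1\times X_2$, $Z_1\subseteq(\mathcal P_1\times I)\times(\mathcal P_2\times I)$, $Z_2\subseteq(\mathcal P_2\times I)\times(\mathcal P_1\times I)$, such that: (1) at each pair $x_1Z_{\mathcal N}x_2$: $V_1(x_1)=V_2(x_2)$; for every $N_2\in\mathcal N_2(x_2)$ there is $N_1\in\mathcal N_1(x_1)$ with every $y_1\in N_1$ related to some $y_2\in N_2$; and symmetrically for every $N_1\in\mathcal N_1(x_1)$; (2) if $x_1Z_{\mathcal N}x_2$, $p(0)=x_1$, $n\ne0$, there are $q$ with $q(0)=x_2$ and $m$ with $p(n)Z_{\mathcal N}q(m)$,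 $(p,n)Z_1(q,m)$; (3) if $x_1Z_{\mathcal N}x_2$, $p(n)=x_1$, $n\ne0$, there are $q,m$ with $q(m)=x_2$, $p(0)Z_{\mathcal N}q(0)$, $(p,n)Z_1(q,m)$; (4) if $(p,n)Z_1(q,m)$ and $0<k_q<m$, there is $0<k_p<n$ with $p(k_p)Z_{\mathcal N}q(k_q)$; (5)–(7) the symmetric conditions with roles of the models swapped and $Z_2$ in place of $Z_1$ (i.e. (5) if $x_1Z_{\mathcal N}x_2$, $q(0)=x_2$, $m\ne0$, there are $p$ with $p(0)=x_1$ and $n$ with $p(n)Z_{\mathcal N}q(m)$, $(q,m)Z_2(p,n)$; (6) if $x_1Z_{\mathcal N}x_2$, $q(m)=x_2$, $m\neq0$, there are $p,n$ with $p(n)=x_1$, $p(0)Z_{\mathcal N}q(0)$, $(q,m)Z_2(p,n)$; (7) if $(q,m)Z_2(p,n)$ and $0<k_p<n$, there is $0<k_q<m$ with $p(k_p)Z_{\mathcal N}q(k_q)$). *)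

theory Defs
  imports Main
begin

definition is_filter_on :: "'a set \<Rightarrow> 'a set set \<Rightarrow> bool" where
  "is_filter_on X F \<longleftrightarrow> F \<subseteq> Pow X \<and> X \<in> F \<and> {} \<notin> F
     \<and> (\<forall>A\<in>F. \<forall>B\<in>F. A \<inter> B \<in> F)
     \<and> (\<forall>A\<in>F. \<forall>B. A \<subseteq> B \<and> B \<subseteq> X \<longrightarrow> B \<in> F)"

definition nbhd_space :: "'a set \<Rightarrow> ('a \<Rightarrow> 'a set set) \<Rightarrow> bool" where
  "nbhd_space X N \<longleftrightarrow> (\<forall>x\<in>X. is_filter_on X (N x) \<and> (\<forall>S\<in>N x. x \<in> S))"

definition quasi_discrete :: "'a set \<Rightarrow> ('a \<Rightarrow> 'a set set) \<Rightarrow> bool" where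
  "quasi_discrete X N \<longleftrightarrow> nbhd_space X N \<and>
     (\<forall>x\<in>X. \<exists>M\<in>N x. \<forall>S\<in>N x. M \<subseteq> S)"

definition nclosure :: "'a set \<Rightarrow> ('a \<Rightarrow> 'a set set) \<Rightarrow> 'a set \<Rightarrow> 'a set" where
  "nclosure X N A = {x\<in>X. \<forall>S\<in>N x. A \<inter> S \<noteq> {}}"

text \<open>Index space: naturals with minimal neighbourhood {n, n+1}.\<close>
definition nat_nbhd :: "nat \<Rightarrow> nat set set" where
  "nat_nbhd n = {S. {n, Suc n} \<subseteq> S}"

definition is_path :: "'a set \<Rightarrow> ('a \<Rightarrow> 'a set set) \<Rightarrow> (nat \<Rightarrow> 'a) \<Rightarrow> bool" where
  "is_path X N p \<longleftrightarrow> (\<forall>n. p n \<in> X) \<and>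
     (\<forall>n. \<forall>S\<in>N (p n). {m. p m \<in> S} \<in> nat_nbhd n)"

definition T0_sep :: "'a set \<Rightarrow> ('a \<Rightarrow> 'a set set) \<Rightarrow> bool" where
  "T0_sep X N \<longleftrightarrow> (\<forall>x\<in>X. \<forall>y\<in>X.
     y \<in> nclosure X N {x} \<and> x \<in> nclosure X N {y} \<longrightarrow> x = y)"

datatype slcs = Atom nat | Top | Neg slcs | Conj slcs slcs | Near slcs
  | Reach slcs slcs | Pass slcs slcs

primrec sat :: "'a set \<Rightarrow> ('a \<Rightarrow> 'a set set) \<Rightarrow> ('a \<Rightarrow> nat set) \<Rightarrow> slcs \<Rightarrow> 'a \<Rightarrow> bool" where
  "sat X N V (Atom a) x \<longleftrightarrow> a \<in> V x"
| "sat X N V Top x \<longleftrightarrow> True"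
| "sat X N V (Neg \<phi>) x \<longleftrightarrow> \<not> sat X N V \<phi> x"
| "sat X N V (Conj \<phi> \<psi>) x \<longleftrightarrow> sat X N V \<phi> x \<and> sat X N V \<psi> x"
| "sat X N V (Near \<phi>) x \<longleftrightarrow> x \<in> nclosure X N {y\<in>X. sat X N V \<phi> y}"
| "sat X N V (Reach \<phi> \<psi>) x \<longleftrightarrow> (\<exists>p n. is_path X N p \<and> p n = x \<and> sat X N V \<psi> (p 0)
      \<and> (\<forall>i. 0 < i \<and> i \<le> n \<longrightarrow> sat X N V \<phi> (p i)))"
| "sat X N V (Pass \<phi> \<psi>) x \<longleftrightarrow> (\<exists>p n. is_path X N p \<and> p 0 = x \<and> sat X N V \<psi> (p n)
      \<and> (\<forall>i<n. sat X N V \<phi> (p i)))"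

end

theory Submission
  imports Defs
begin

text \<open>In an indiscrete space, where the whole carrier is the only neighbourhood of every point,
every sequence in the carrier is a path and every nonempty set is dense. Hence, with the empty
valuation, the truth value of an SLCS formula is the same at every point of every nonempty
indiscrete space, irrespective of its size. But an indiscrete space is T0 exactly when it has at
most one point, so no formula can characterise T0-separation: it would have to hold everywhere
in a one-point indiscrete space and fail somewhere in a two-point one.\<close>

abbreviation indiscrete :: "'a set \<Rightarrow> 'a \<Rightarrow> 'a set set" where
  "indiscrete X \<equiv> \<lambda>_. {X}"

primrec indiscrete_value :: "slcs \<Rightarrow> bool" where
  "indiscrete_value (Atom a) = False"
| "indiscrete_value Top = True"
| "indiscrete_value (Neg \<phi>) = (\<not> indiscrete_value \<phi>)"
| "indiscrete_value (Conj \<phi> \<psi>) = (indiscrete_value \<phi> \<and> indiscrete_value \<psi>)"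
| "indiscrete_value (Near \<phi>) = indiscrete_value \<phi>"
| "indiscrete_value (Reach \<phi> \<psi>) = indiscrete_value \<psi>"
| "indiscrete_value (Pass \<phi> \<psi>) = indiscrete_value \<psi>"

lemma quasi_discrete_indiscrete:
  assumes "X \<noteq> {}"
  shows "quasi_discrete X (indiscrete X)"
  using assms unfolding quasi_discrete_def nbhd_space_def is_filter_on_def by auto

lemma is_path_indiscrete_iff: "is_path X (indiscrete X) p \<longleftrightarrow> (\<forall>n. p n \<in> X)"
  unfolding is_path_def nat_nbhd_def by auto

lemma nclosure_indiscrete: "nclosure X (indiscrete X) A = (if A \<inter> X = {} then {} else X)"
  unfolding nclosure_def by auto

lemma T0_sep_indiscrete_iff: "T0_sep X (indiscrete X) \<longleftrightarrow> (\<forall>x\<in>X. \<forall>y\<in>X. x = y)"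
  unfolding T0_sep_def nclosure_indiscrete by auto

lemma sat_indiscrete:
  assumes "X \<noteq> {}" and "x \<in> X"
  shows "sat X (indiscrete X) (\<lambda>_. {}) \<phi> x \<longleftrightarrow> indiscrete_value \<phi>"
  using assms(2)
proof (induction \<phi> arbitrary: x)
  case (Near \<phi>)
  then show ?case
    using assms(1) by (auto simp: nclosure_indiscrete)
next
  case (Reach \<phi> \<psi>)
  have "is_path X (indiscrete X) (\<lambda>_. x)"
    using Reach.prems by (simp add: is_path_indiscrete_iff)
  \<comment> \<open>the constant path of length 0 witnesses the formula as soon as \<open>\<psi>\<close> holds\<close>
  then show ?case
    using Reach by (auto simp: is_path_indiscrete_iff intro!: exI[of _ 0])
next
  case (Pass \<phi> \<psi>)
  have "is_path X (indiscrete X) (\<lambda>_. x)"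
    using Pass.prems by (simp add: is_path_indiscrete_iff)
  then show ?case
    using Pass by (auto simp: is_path_indiscrete_iff intro!: exI[of _ 0])
qed auto

theorem proposition19:
  assumes "infinite (UNIV :: 'a set)"
  shows "\<not> (\<exists>\<phi>. \<forall>(X :: 'a set) N (V :: 'a \<Rightarrow> nat set).
            quasi_discrete X N \<longrightarrow> (T0_sep X N \<longleftrightarrow> (\<forall>x\<in>X. sat X N V \<phi> x)))"
proof
  assume "\<exists>\<phi>. \<forall>(X :: 'a set) N (V :: 'a \<Rightarrow> nat set).
            quasi_discrete X N \<longrightarrow> (T0_sep X N \<longleftrightarrow> (\<forall>x\<in>X. sat X N V \<phi> x))"
  then obtain \<phi> where characterises: "\<And>(X :: 'a set) N (V :: 'a \<Rightarrow> nat set).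
      quasi_discrete X N \<Longrightarrow> T0_sep X N \<longleftrightarrow> (\<forall>x\<in>X. sat X N V \<phi> x)"
    by blast
  have T0_iff: "T0_sep X (indiscrete X) \<longleftrightarrow> indiscrete_value \<phi>" if "X \<noteq> {}" for X :: "'a set"
    using characterises[OF quasi_discrete_indiscrete[OF that], of "\<lambda>_. {}"]
      sat_indiscrete[OF that] that by auto
  obtain a b :: 'a where "a \<noteq> b"
    using assms by (metis UNIV_eq_I finite.emptyI finite_insert singletonI insertE)
  then have "T0_sep {a} (indiscrete {a})" and "\<not> T0_sep {a, b} (indiscrete {a, b})"
    by (auto simp: T0_sep_indiscrete_iff)
  then show False
    using T0_iff[of "{a}"] T0_iff[of "{a, b}"] by simp
qed

end
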